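(* For all integers $n\ge 28$, \[ C(n) \le \frac12\log\!\left(\frac{n\pi}{2e}\right) + r_{\rm UB}(n),\qquad r_{\rm UB}(n) := -\log\!\left(1-2\left(\frac{2e}{n\pi}\right)^{1/4}\right)+\frac{10}{\log\frac{n\pi}{2e}}. \]
   Context: All logarithms are natural. For an integer $n\ge1$, the binomial channel has input $X\in[0,1]$, output $Y\in\{0,\dots,n\}$ and transition law $P_{Y|X}(y|x)=\binom{n}{y}x^y(1-x)^{n-y}$. Its capacity is $C(n)=\max_{P_X} I(X;Y)$, the maximum taken over all probability distributions $P_X$ on $[0,1]$. *)

theory Defs
  imports "HOL-Probability.Probability"
begin

definition binom_W :: "nat \<Rightarrow> real \<Rightarrow> nat \<Rightarrow> real" where
  "binom_W n x y = real (n choose y) * x ^ y * (1 - x) ^ (n - y)"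

definition binom_out :: "nat \<Rightarrow> real measure \<Rightarrow> nat \<Rightarrow> real" where
  "binom_out n M y = (\<integral>x. binom_W n x y \<partial>M)"

definition binom_MI :: "nat \<Rightarrow> real measure \<Rightarrow> real" where
  "binom_MI n M = (\<integral>x. (\<Sum>y\<le>n. if binom_W n x y = 0 then 0
        else binom_W n x y * ln (binom_W n x y / binom_out n M y)) \<partial>M)"

definition input_dists :: "real measure set" where
  "input_dists = {M. prob_space M \<and> sets M = sets (restrict_space borel {0..1::real})}"

definition binom_capacity :: "nat \<Rightarrow> real" where
  "binom_capacity n = Sup (binom_MI n ` input_dists)"

definition r_UB :: "nat \<Rightarrow> real" where
  "r_UB n = - ln (1 - 2 * ((2 * exp 1) / (real n * pi)) powr (1/4))
            + 10 / ln (real n * pi / (2 * exp 1))"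

end

theory Submission
  imports Defs
begin

text \<open>By duality, \<open>I(X;Y) \<le> sup\<^sub>x D(W\<^sub>x \<parallel> Q)\<close> for every output law \<open>Q\<close>.
  With \<open>L = ln (n pi / (2 e))\<close> we take for \<open>Q\<close> the discretised arcsine law
  \<open>1 / (pi sqrt (y (n - y)))\<close> with weight \<open>1 - 1/L\<close>, mixed with a law with quadratically
  decaying tails at \<open>0\<close> and \<open>n\<close>. If \<open>n x (1 - x) \<ge> L / 30\<close>, a Stirling bound for the
  binomial coefficients (Robbins' monotonicity argument, with the constant from Wallis'
  product) gives \<open>ln (W\<^sub>x y / Q y) \<le> ln (n pi / 2) / 2 - ln (1 - 1/L) - n d(y/n \<parallel> x)\<close>, and a
  third-order expansion of the binary divergence \<open>d\<close> together with the central moments of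
  the binomial law gives \<open>E [n d(Y/n \<parallel> x)] \<ge> 1/2 - 5/L\<close>. Otherwise \<open>x\<close> is near an endpoint
  and the tail component together with Jensen's inequality gives
  \<open>D(W\<^sub>x \<parallel> Q) \<le> ln (4 L) + 2 ln (1 + L/15)\<close>. Both bounds are at most \<open>L/2 + 10/L\<close>; the
  first summand of \<open>r_UB\<close> is nonnegative and not needed.\<close>

lemma ln_add_one_ge_rational:
  fixes z :: real
  assumes "0 \<le> z"
  shows "2 * z / (2 + z) \<le> ln (1 + z)"
proof -
  let ?f = "\<lambda>z::real. ln (1 + z) - 2 * z / (2 + z)"
  have "?f 0 \<le> ?f z"
  proof (rule DERIV_nonneg_imp_nondecreasing[OF assms])
    fix x :: real assume "0 \<le> x" "x \<le> z"
    then have "(?f has_real_derivative 1 / (1 + x) - 4 / (2 + x)\<^sup>2) (at x)"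
      by (auto intro!: derivative_eq_intros simp: field_simps power2_eq_square)
    moreover have "1 / (1 + x) - 4 / (2 + x)\<^sup>2 = x\<^sup>2 / ((1 + x) * (2 + x)\<^sup>2)"
      using \<open>0 \<le> x\<close> by (simp add: divide_simps power2_eq_square) (simp add: algebra_simps)
    ultimately show "\<exists>d. (?f has_real_derivative d) (at x) \<and> 0 \<le> d"
      using \<open>0 \<le> x\<close> by fastforce
  qed
  then show ?thesis by simp
qed

lemma ln_add_one_le_rational:
  fixes z :: real
  assumes "0 \<le> z"
  shows "ln (1 + z) \<le> z * (2 + z) / (2 * (1 + z))"
proof -
  let ?f = "\<lambda>z::real. z * (2 + z) / (2 * (1 + z)) - ln (1 + z)"
  have "?f 0 \<le> ?f z"
  proof (rule DERIV_nonneg_imp_nondecreasing[OF assms])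
    fix x :: real assume "0 \<le> x" "x \<le> z"
    then have "(?f has_real_derivative
        ((2 + 2 * x) * (2 * (1 + x)) - x * (2 + x) * 2) / (2 * (1 + x))\<^sup>2 - 1 / (1 + x)) (at x)"
      by (auto intro!: derivative_eq_intros simp: field_simps power2_eq_square)
    moreover have "((2 + 2 * x) * (2 * (1 + x)) - x * (2 + x) * 2) / (2 * (1 + x))\<^sup>2 - 1 / (1 + x)
        = x\<^sup>2 / (2 * (1 + x)\<^sup>2)"
      using \<open>0 \<le> x\<close> by (simp add: divide_simps power2_eq_square) (simp add: algebra_simps)
    ultimately show "\<exists>d. (?f has_real_derivative d) (at x) \<and> 0 \<le> d"
      using \<open>0 \<le> x\<close> by fastforce
  qed
  then show ?thesis by simp
qed

lemma xlnx_ge_cubic: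
  fixes r :: real
  assumes "0 \<le> r"
  shows "(r - 1)\<^sup>2 / 2 - (r - 1) ^ 3 / 6 \<le> r * ln r - r + 1"
proof (cases "r = 0")
  case True
  then show ?thesis by (simp add: power3_eq_cube)
next
  case False
  define \<phi> where "\<phi> s = s * ln s - s + 1 - (s - 1)\<^sup>2 / 2 + (s - 1) ^ 3 / 6" for s :: real
  define \<psi> where "\<psi> s = ln s - (s - 1) + (s - 1)\<^sup>2 / 2" for s :: real
  have d\<phi>: "(\<phi> has_real_derivative \<psi> s) (at s)" if "0 < s" for s
    unfolding \<phi>_def \<psi>_def using that
    by (auto intro!: derivative_eq_intros simp: field_simps power2_eq_square)
  have d\<psi>: "(\<psi> has_real_derivative (s - 1)\<^sup>2 / s) (at s)" if "0 < s" for s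
  proof -
    have "(\<psi> has_real_derivative 1 / s - 1 + (s - 1)) (at s)"
      unfolding \<psi>_def using that by (auto intro!: derivative_eq_intros simp: field_simps)
    moreover have "1 / s - 1 + (s - 1) = (s - 1)\<^sup>2 / s"
      using that by (simp add: divide_simps power2_eq_square) (simp add: algebra_simps)
    ultimately show ?thesis by simp
  qed
  \<comment> \<open>\<open>\<psi>\<close> is increasing with \<open>\<psi> 1 = 0\<close>, so \<open>\<phi>\<close> has its minimum \<open>\<phi> 1 = 0\<close> at \<open>1\<close>.\<close>
  have \<psi>_mono: "\<psi> s \<le> \<psi> t" if "0 < s" "s \<le> t" for s t
    using that by (intro DERIV_nonneg_imp_nondecreasing[of s t \<psi>])
      (auto intro!: exI[of _ "(_ - 1)\<^sup>2 / _"] d\<psi>)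
  have "\<phi> 1 \<le> \<phi> r"
  proof (cases "1 \<le> r")
    case True
    show ?thesis
      using True \<psi>_mono[of 1] by (intro DERIV_nonneg_imp_nondecreasing[OF True])
        (auto intro!: exI[of _ "\<psi> _"] d\<phi> simp: \<psi>_def)
  next
    case False
    show ?thesis
      using False \<open>0 \<le> r\<close> \<open>r \<noteq> 0\<close> \<psi>_mono[of _ 1]
      by (intro DERIV_nonpos_imp_nonincreasing[of r 1])
        (auto intro!: exI[of _ "\<psi> _"] d\<phi> simp: \<psi>_def)
  qed
  then show ?thesis by (simp add: \<phi>_def)
qed

lemma xlnx_ge_cubic_scaled:
  fixes a b :: real
  assumes "0 \<le> a" "0 < b"
  shows "(a - b)\<^sup>2 / (2 * b) - (a - b) ^ 3 / (6 * b\<^sup>2) \<le> a * ln (a / b) - a + b"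
proof -
  have "b * ((a / b - 1)\<^sup>2 / 2 - (a / b - 1) ^ 3 / 6) \<le> b * (a / b * ln (a / b) - a / b + 1)"
    using assms by (intro mult_left_mono xlnx_ge_cubic) auto
  moreover have "b * ((a / b - 1)\<^sup>2 / 2 - (a / b - 1) ^ 3 / 6)
      = (a - b)\<^sup>2 / (2 * b) - (a - b) ^ 3 / (6 * b\<^sup>2)"
    using assms by (simp add: divide_simps power2_eq_square power3_eq_cube)
  moreover have "b * (a / b * ln (a / b) - a / b + 1) = a * ln (a / b) - a + b"
    using assms by (simp add: divide_simps algebra_simps)
  ultimately show ?thesis by simp
qed

section \<open>A Stirling-type bound for binomial coefficients\<close>

definition stirling_rem :: "nat \<Rightarrow> real" where
  "stirling_rem m = ln (fact m) - (real m + 1/2) * ln (real m) + real m"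

lemma stirling_rem_diff:
  assumes "1 \<le> m"
  shows "stirling_rem m - stirling_rem (Suc m) = (real m + 1/2) * ln (1 + 1 / real m) - 1"
proof -
  have fact_Suc: "ln (fact (Suc m) :: real) = ln (real m + 1) + ln (fact m)"
    by (simp add: ln_mult)
  have "1 + 1 / real m = (real m + 1) / real m"
    using assms by (simp add: field_simps)
  then have "ln (1 + 1 / real m) = ln (real m + 1) - ln (real m)"
    using assms by (simp add: ln_div)
  then show ?thesis
    unfolding stirling_rem_def by (simp only: of_nat_Suc fact_Suc) (simp add: algebra_simps)
qed

lemma stirling_rem_Suc_le:
  assumes "1 \<le> m"
  shows "stirling_rem (Suc m) \<le> stirling_rem m"
proof -
  have "1 / (real m + 1/2) \<le> ln (1 + 1 / real m)"
    using ln_add_one_ge_rational[of "1 / real m"] assms by (simp add: field_simps)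
  then have "1 \<le> (real m + 1/2) * ln (1 + 1 / real m)"
    using assms by (simp add: field_simps)
  then show ?thesis using stirling_rem_diff[OF assms] by simp
qed

lemma stirling_rem_antimono: "m \<le> k \<Longrightarrow> 1 \<le> m \<Longrightarrow> stirling_rem k \<le> stirling_rem m"
proof (induction k rule: dec_induct)
  case base
  then show ?case by simp
next
  case (step k)
  then show ?case using stirling_rem_Suc_le[of k] by simp
qed

lemma stirling_rem_diff_le:
  assumes "1 \<le> m"
  shows "stirling_rem m - stirling_rem (Suc m) \<le> 1 / (2 * real m) - 1 / (2 * real (Suc m))"
proof -
  have m: "0 < real m" using assms by simp
  have "(real m + 1/2) * ln (1 + 1 / real m)
      \<le> (real m + 1/2) * (1 / real m * (2 + 1 / real m) / (2 * (1 + 1 / real m)))"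
    using m by (intro mult_left_mono ln_add_one_le_rational) auto
  also have "\<dots> = 1 + 1 / (4 * real m * (real m + 1))"
    using m by (simp add: divide_simps) (simp add: algebra_simps)
  also have "\<dots> \<le> 1 + 1 / (2 * real m * (real m + 1))"
    using m by (simp add: divide_simps) (simp add: algebra_simps)
  also have "1 / (2 * real m * (real m + 1)) = 1 / (2 * real m) - 1 / (2 * real (Suc m))"
    using m by (simp add: divide_simps)
  finally show ?thesis using stirling_rem_diff[OF assms] by simp
qed

lemma stirling_rem_lower: "1 \<le> m \<Longrightarrow> 1/2 + 1 / (2 * real m) \<le> stirling_rem m"
proof (induction m rule: dec_induct)
  case base
  then show ?case by (simp add: stirling_rem_def)
next
  case (step m)
  then show ?case using stirling_rem_diff_le[of m] by simp
qed

lemma wallis_partial_product: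
  "(\<Prod>k=1..m. 4 * real k ^ 2 / (4 * real k ^ 2 - 1))
     = 16 ^ m * (fact m) ^ 4 / ((fact (2 * m)) ^ 2 * (2 * real m + 1))"
proof (induction m)
  case 0
  then show ?case by simp
next
  case (Suc m)
  define F :: real where "F = fact m"
  define G :: real where "G = fact (2 * m)"
  have "G > 0" unfolding G_def by simp
  have "(\<Prod>k=1..Suc m. 4 * real k ^ 2 / (4 * real k ^ 2 - 1))
      = 16 ^ m * F ^ 4 / (G\<^sup>2 * (2 * real m + 1))
        * (4 * (real m + 1)\<^sup>2 / ((2 * real m + 1) * (2 * real m + 3)))"
    using Suc.IH by (simp add: F_def G_def algebra_simps power2_eq_square)
  also have "\<dots> = 16 ^ Suc m * ((real m + 1) * F) ^ 4
      / (((2 * real m + 2) * (2 * real m + 1) * G)\<^sup>2 * (2 * real (Suc m) + 1))"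
    using \<open>G > 0\<close> by (simp add: divide_simps) (simp add: algebra_simps power2_eq_square power4_eq_xxxx)
  also have "\<dots> = 16 ^ Suc m * (fact (Suc m)) ^ 4 / ((fact (2 * Suc m))\<^sup>2 * (2 * real (Suc m) + 1))"
    by (simp add: F_def G_def algebra_simps)
  finally show ?case .
qed

lemma ln_wallis_partial_product:
  assumes "1 \<le> m"
  shows "ln (\<Prod>k=1..m. 4 * real k ^ 2 / (4 * real k ^ 2 - 1))
         = 4 * stirling_rem m - 2 * stirling_rem (2 * m) - ln 2 - ln (2 + 1 / real m)"
proof -
  have m: "0 < real m" using assms by simp
  define F :: real where "F = fact m"
  define G :: real where "G = fact (2 * m)"
  have "F > 0" "G > 0" unfolding F_def G_def by auto
  have "ln (16 ^ m * F ^ 4 / (G\<^sup>2 * (2 * real m + 1)))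
      = real m * ln 16 + 4 * ln F - 2 * ln G - ln (2 * real m + 1)"
    using \<open>F > 0\<close> \<open>G > 0\<close> m by (simp add: ln_mult ln_div ln_realpow)
  moreover have "ln (16 :: real) = 4 * ln 2"
    using ln_realpow[of 2 4] by simp
  moreover have "ln F = stirling_rem m + (real m + 1/2) * ln (real m) - real m"
    unfolding stirling_rem_def F_def by simp
  moreover have "ln G = stirling_rem (2 * m) + (2 * real m + 1/2) * (ln 2 + ln (real m)) - 2 * real m"
    unfolding stirling_rem_def G_def using m by (simp add: ln_mult)
  moreover have "2 + 1 / real m = (2 * real m + 1) / real m"
    using m by (simp add: field_simps)
  then have "ln (2 + 1 / real m) = ln (2 * real m + 1) - ln (real m)"
    using m by (simp add: ln_div)
  ultimately show ?thesis
    unfolding wallis_partial_product F_def[symmetric] G_def[symmetric] by (simp add: algebra_simps)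
qed

lemma stirling_rem_convergent:
  obtains c where "(\<lambda>k. stirling_rem (Suc k)) \<longlonglongrightarrow> c" "\<forall>k. c \<le> stirling_rem (Suc k)"
proof -
  have "decseq (\<lambda>k. stirling_rem (Suc k))"
    by (rule decseq_SucI) (simp add: stirling_rem_Suc_le)
  moreover have "\<forall>k. 1/2 \<le> stirling_rem (Suc k)"
  proof
    fix k
    have "0 \<le> 1 / (2 * real (Suc k))" by simp
    then show "1/2 \<le> stirling_rem (Suc k)" using stirling_rem_lower[of "Suc k"] by linarith
  qed
  ultimately show ?thesis
    by (rule decseq_convergent) (rule that)
qed

text \<open>Wallis' product identifies the limit of the decreasing sequence \<open>stirling_rem\<close>.\<close>
lemma stirling_rem_ge:
  assumes "1 \<le> m"
  shows "ln (2 * pi) / 2 \<le> stirling_rem m"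
proof -
  obtain c where lim: "(\<lambda>k. stirling_rem (Suc k)) \<longlonglongrightarrow> c" and below: "\<forall>k. c \<le> stirling_rem (Suc k)"
    by (rule stirling_rem_convergent)
  have "(\<lambda>k. stirling_rem (Suc (2 * k + 1))) \<longlonglongrightarrow> c"
    using LIMSEQ_subseq_LIMSEQ[OF lim, of "\<lambda>k. 2 * k + 1"] by (simp add: strict_mono_def o_def)
  then have lim2: "(\<lambda>k. stirling_rem (2 * Suc k)) \<longlonglongrightarrow> c"
    by simp
  have "(\<lambda>k. 2 + 1 / real (Suc k)) \<longlonglongrightarrow> 2 + 0"
    by (intro tendsto_intros LIMSEQ_Suc[OF lim_inverse_n'])
  then have lim_ln: "(\<lambda>k. ln (2 + 1 / real (Suc k))) \<longlonglongrightarrow> ln 2"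
    by (intro tendsto_ln) auto
  have wallis_eq: "ln (\<Prod>i=1..Suc k. 4 * real i ^ 2 / (4 * real i ^ 2 - 1))
      = 4 * stirling_rem (Suc k) - 2 * stirling_rem (2 * Suc k) - ln 2 - ln (2 + 1 / real (Suc k))" for k
    by (rule ln_wallis_partial_product) simp
  have "(\<lambda>k. ln (\<Prod>i=1..Suc k. 4 * real i ^ 2 / (4 * real i ^ 2 - 1)))
      \<longlonglongrightarrow> 4 * c - 2 * c - ln 2 - ln 2"
    unfolding wallis_eq by (intro tendsto_diff tendsto_mult_left tendsto_const lim lim2 lim_ln)
  moreover have "(\<lambda>k. ln (\<Prod>i=1..Suc k. 4 * real i ^ 2 / (4 * real i ^ 2 - 1))) \<longlonglongrightarrow> ln (pi / 2)"
    by (intro tendsto_ln LIMSEQ_Suc[OF wallis]) simp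
  ultimately have "ln (pi / 2) = 4 * c - 2 * c - ln 2 - ln 2"
    using LIMSEQ_unique by blast
  then have "c = ln (2 * pi) / 2"
    by (simp add: ln_div ln_mult algebra_simps)
  moreover obtain k where "m = Suc k"
    using assms by (cases m) auto
  ultimately show ?thesis
    using below[rule_format, of k] by simp
qed

lemma ln_binomial_le:
  assumes "1 \<le> k" "k < n"
  shows "ln (real (n choose k)) \<le> - ln (2 * pi) / 2 + (real n + 1/2) * ln (real n)
          - (real k + 1/2) * ln (real k) - (real (n - k) + 1/2) * ln (real (n - k))"
proof -
  have "ln (real (n choose k)) = ln (fact n) - ln (fact k) - ln (fact (n - k))"
    using assms by (simp add: binomial_fact ln_div ln_mult)
  moreover have "stirling_rem n \<le> stirling_rem k"
    using assms by (intro stirling_rem_antimono) auto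
  moreover have "ln (2 * pi) / 2 \<le> stirling_rem (n - k)"
    using assms by (intro stirling_rem_ge) auto
  ultimately show ?thesis
    unfolding stirling_rem_def using assms by (simp add: algebra_simps)
qed

lemma arcsin_affine_has_real_derivative:
  fixes n t :: real
  assumes "0 < t" "t < n"
  shows "((\<lambda>u. arcsin (2 * u / n - 1)) has_real_derivative 1 / sqrt (t * (n - t))) (at t)"
proof -
  have n: "0 < n" using assms by simp
  have "-1 < 2 * t / n - 1" "2 * t / n - 1 < 1"
    using assms n by (auto simp: field_simps)
  then have "((\<lambda>u. arcsin (2 * u / n - 1)) has_real_derivative
      inverse (sqrt (1 - (2 * t / n - 1)\<^sup>2)) * (2 / n)) (at t)"
    by (auto intro!: derivative_eq_intros)
  moreover have "sqrt (1 - (2 * t / n - 1)\<^sup>2) = 2 * sqrt (t * (n - t)) / n"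
  proof -
    have "1 - (2 * t / n - 1)\<^sup>2 = 4 * (t * (n - t)) / n\<^sup>2"
      using n by (simp add: field_simps power2_eq_square)
    then show ?thesis
      using n by (simp add: real_sqrt_divide real_sqrt_mult)
  qed
  moreover have "0 < sqrt (t * (n - t))"
    using assms by simp
  ultimately show ?thesis
    using n by (simp add: field_simps)
qed

lemma inverse_sqrt_midpoint_convex:
  fixes n y h :: real
  assumes "0 \<le> h" "h < y" "y + h < n"
  shows "2 / sqrt (y * (n - y)) \<le> 1 / sqrt ((y + h) * (n - (y + h))) + 1 / sqrt ((y - h) * (n - (y - h)))"
proof -
  define a where "a = 1 / sqrt ((y + h) * (n - (y + h)))"
  define b where "b = 1 / sqrt ((y - h) * (n - (y - h)))"
  have pos: "0 < (y + h) * (n - (y + h))" "0 < (y - h) * (n - (y - h))" "0 < y * (n - y)"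
    using assms by auto
  have "(y + h) * (n - (y + h)) * ((y - h) * (n - (y - h)))
      = (y * (n - y))\<^sup>2 - h\<^sup>2 * (y\<^sup>2 + (n - y)\<^sup>2 - h\<^sup>2)"
    by (simp add: algebra_simps power2_eq_square)
  moreover have "h\<^sup>2 \<le> y\<^sup>2"
    using assms by (intro power_mono) auto
  ultimately have "(y + h) * (n - (y + h)) * ((y - h) * (n - (y - h))) \<le> (y * (n - y))\<^sup>2"
    by (simp add: add_increasing2)
  then have "sqrt ((y + h) * (n - (y + h)) * ((y - h) * (n - (y - h)))) \<le> y * (n - y)"
    using real_sqrt_le_mono pos by fastforce
  then have "1 / (y * (n - y)) \<le> 1 / sqrt ((y + h) * (n - (y + h)) * ((y - h) * (n - (y - h))))"
    using pos by (intro divide_left_mono) auto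
  then have "1 / (y * (n - y)) \<le> a * b"
    unfolding a_def b_def by (simp add: real_sqrt_mult)
  moreover have "4 * (a * b) \<le> (a + b)\<^sup>2"
    using sum_squares_ge_zero[of "a - b" 0] by (simp add: power2_eq_square algebra_simps)
  ultimately have "(2 / sqrt (y * (n - y)))\<^sup>2 \<le> (a + b)\<^sup>2"
    using pos by (simp add: power_divide)
  then show ?thesis
    unfolding a_def b_def by (rule power2_le_imp_le) (use pos in simp)
qed

lemma inverse_sqrt_le_arcsin_diff:
  fixes n y :: real
  assumes "1 \<le> y" "y + 1 \<le> n"
  shows "1 / sqrt (y * (n - y)) \<le> arcsin (2 * (y + 1/2) / n - 1) - arcsin (2 * (y - 1/2) / n - 1)"
proof -
  define F where "F u = arcsin (2 * u / n - 1)" for u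
  define f where "f u = 1 / sqrt (u * (n - u))" for u
  let ?g = "\<lambda>h. F (y + h) - F (y - h) - 2 * h * f y"
  have "?g 0 \<le> ?g (1/2)"
  proof (rule DERIV_nonneg_imp_nondecreasing[where f = ?g])
    fix h :: real assume h: "0 \<le> h" "h \<le> 1/2"
    have "(F has_real_derivative f (y + h)) (at (y + h))" "(F has_real_derivative f (y - h)) (at (y - h))"
      unfolding F_def f_def using h assms by (auto intro!: arcsin_affine_has_real_derivative)
    then have "(?g has_real_derivative f (y + h) * 1 - f (y - h) * (- 1) - 2 * f y) (at h)"
      by (auto intro!: derivative_eq_intros DERIV_chain2[where f = F])
    moreover have "2 * f y \<le> f (y + h) + f (y - h)"
      unfolding f_def using inverse_sqrt_midpoint_convex[of h y n] h assms by simp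
    ultimately show "\<exists>d. (?g has_real_derivative d) (at h) \<and> 0 \<le> d"
      by (intro exI conjI) auto
  qed simp
  then show ?thesis by (simp add: F_def f_def)
qed

text \<open>The sum is a Riemann sum for \<open>\<integral>\<^sub>0\<^sup>n 1 / sqrt (u * (n - u)) du = pi\<close>; convexity of the
  integrand makes each term at most the integral over the cell around it.\<close>
lemma sum_inverse_sqrt_le_pi:
  assumes "2 \<le> n"
  shows "(\<Sum>y=1..n-1. 1 / sqrt (real y * (real n - real y))) \<le> pi"
proof -
  define G where "G k = arcsin (2 * (real k - 1/2) / real n - 1)" for k :: nat
  have "(\<Sum>y=1..n-1. 1 / sqrt (real y * (real n - real y))) \<le> (\<Sum>y=1..n-1. G (Suc y) - G y)"
  proof (rule sum_mono)
    fix y assume "y \<in> {1..n-1}"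
    then have y: "1 \<le> real y" "real y + 1 \<le> real n"
      using assms by auto
    have "real (Suc y) - 1/2 = real y + 1/2"
      by simp
    then show "1 / sqrt (real y * (real n - real y)) \<le> G (Suc y) - G y"
      unfolding G_def using inverse_sqrt_le_arcsin_diff[OF y] by (simp add: algebra_simps)
  qed
  also have "\<dots> = G n - G 1"
    using assms sum_Suc_diff[of 1 "n - 1" G] by simp
  also have "\<dots> \<le> pi/2 - (- (pi/2))"
  proof -
    have "-1 \<le> 2 * (real k - 1/2) / real n - 1 \<and> 2 * (real k - 1/2) / real n - 1 \<le> 1"
      if "1 \<le> k" "k \<le> n" for k
      using that by (auto simp: field_simps)
    from this[of n] this[of 1] show ?thesis
      unfolding G_def using assms by (intro diff_mono arcsin_ubound arcsin_lbound) auto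
  qed
  finally show ?thesis by simp
qed

lemma sum_inverse_square_le: "(\<Sum>k\<le>N. 1 / (real k + 1)\<^sup>2) \<le> 2 - 1 / (real N + 1)"
proof (induction N)
  case 0
  then show ?case by simp
next
  case (Suc N)
  have "1 / (real N + 2)\<^sup>2 \<le> 1 / ((real N + 1) * (real N + 2))"
    by (intro divide_left_mono) (auto simp: power2_eq_square)
  also have "\<dots> = 1 / (real N + 1) - 1 / (real N + 2)"
    by (simp add: divide_simps)
  finally show ?case
    using Suc.IH by (simp add: add.commute)
qed

section \<open>Moments of the binomial law\<close>

lemma binom_W_nonneg: "0 \<le> x \<Longrightarrow> x \<le> 1 \<Longrightarrow> 0 \<le> binom_W n x y"
  unfolding binom_W_def by simp

lemma binom_W_pos: "0 < x \<Longrightarrow> x < 1 \<Longrightarrow> y \<le> n \<Longrightarrow> 0 < binom_W n x y"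
  unfolding binom_W_def by simp

lemma sum_binom_W: "(\<Sum>y\<le>n. binom_W n x y) = 1"
  using binomial_ring[of x "1 - x" n] by (simp add: binom_W_def)

lemma binom_W_le_1:
  assumes "0 \<le> x" "x \<le> 1"
  shows "binom_W n x y \<le> 1"
proof (cases "y \<le> n")
  case True
  then show ?thesis
    using member_le_sum[of y "{..n}" "binom_W n x"] assms binom_W_nonneg sum_binom_W by auto
qed (simp add: binom_W_def binomial_eq_0)

lemma binom_W_measurable: "(\<lambda>x. binom_W n x y) \<in> borel_measurable borel"
  unfolding binom_W_def by measurable

lemma sum_binom_W_choose:
  assumes "k \<le> n"
  shows "(\<Sum>y\<le>n. real (y choose k) * binom_W n x y) = real (n choose k) * x ^ k"
proof -
  have "(\<Sum>y\<le>n. real (y choose k) * binom_W n x y) = (\<Sum>y=k..n. real (y choose k) * binom_W n x y)"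
    by (rule sum.mono_neutral_right) auto
  also have "\<dots> = (\<Sum>y=k..n. real (n choose k) * x ^ k
      * (real ((n - k) choose (y - k)) * x ^ (y - k) * (1 - x) ^ ((n - k) - (y - k))))"
  proof (rule sum.cong[OF refl])
    fix y assume y: "y \<in> {k..n}"
    have "real (n choose y) * real (y choose k) = real (n choose k) * real ((n - k) choose (y - k))"
      using choose_mult[of k y n] y by (simp flip: of_nat_mult)
    moreover have "x ^ y = x ^ k * x ^ (y - k)"
      using y by (simp flip: power_add)
    moreover have "n - y = (n - k) - (y - k)"
      using y by simp
    ultimately show "real (y choose k) * binom_W n x y = real (n choose k) * x ^ k
        * (real ((n - k) choose (y - k)) * x ^ (y - k) * (1 - x) ^ ((n - k) - (y - k)))"
      unfolding binom_W_def by (simp add: algebra_simps)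
  qed
  also have "\<dots> = real (n choose k) * x ^ k
      * (\<Sum>y=k..n. real ((n - k) choose (y - k)) * x ^ (y - k) * (1 - x) ^ ((n - k) - (y - k)))"
    by (simp add: sum_distrib_left)
  also have "(\<Sum>y=k..n. real ((n - k) choose (y - k)) * x ^ (y - k) * (1 - x) ^ ((n - k) - (y - k)))
      = (\<Sum>j=0..n-k. real ((n - k) choose j) * x ^ j * (1 - x) ^ ((n - k) - j))"
    using assms by (subst sum.atLeastAtMost_shift_0) (auto simp: comp_def)
  also have "\<dots> = 1"
    using binomial_ring[of x "1 - x" "n - k"] by (simp add: atLeast0AtMost)
  finally show ?thesis by simp
qed

lemma sum_binom_W_falling:
  assumes "k \<le> n"
  shows "(\<Sum>y\<le>n. (\<Prod>i<k. real y - real i) * binom_W n x y) = (\<Prod>i<k. real n - real i) * x ^ k"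
proof -
  have falling: "(\<Prod>i<k. real m - real i) = fact k * real (m choose k)" for m
    by (simp add: binomial_gbinomial gbinomial_mult_fact atLeast0LessThan)
  show ?thesis
    using sum_binom_W_choose[OF assms, of x]
    by (simp add: falling mult.assoc flip: sum_distrib_left)
qed

lemma sum_binom_W_mean: "1 \<le> n \<Longrightarrow> (\<Sum>y\<le>n. real y * binom_W n x y) = real n * x"
  using sum_binom_W_falling[of 1 n x] by simp

lemma binom_W_central_moments:
  fixes n :: nat and x :: real
  assumes "3 \<le> n"
  defines "\<mu> \<equiv> real n * x"
  shows "(\<Sum>y\<le>n. (real y - \<mu>)\<^sup>2 * binom_W n x y) = real n * x * (1 - x)"
    and "(\<Sum>y\<le>n. (real y - \<mu>) ^ 3 * binom_W n x y) = real n * x * (1 - x) * (1 - 2 * x)"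
proof -
  have "(\<Prod>i<2. real m - real i) = real m * (real m - 1)"
    and "(\<Prod>i<3. real m - real i) = real m * (real m - 1) * (real m - 2)" for m
    by (simp_all add: numeral_3_eq_3 numeral_2_eq_2)
  note falling = this
  have m1: "(\<Sum>y\<le>n. real y * binom_W n x y) = real n * x"
    using sum_binom_W_mean assms by simp
  have m2: "(\<Sum>y\<le>n. real y * (real y - 1) * binom_W n x y) = real n * (real n - 1) * x\<^sup>2"
    using sum_binom_W_falling[of 2 n x, unfolded falling] assms by simp
  have m3: "(\<Sum>y\<le>n. real y * (real y - 1) * (real y - 2) * binom_W n x y)
      = real n * (real n - 1) * (real n - 2) * x ^ 3"
    using sum_binom_W_falling[of 3 n x, unfolded falling] assms by simp
  have "(\<Sum>y\<le>n. (real y - \<mu>)\<^sup>2 * binom_W n x y)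
      = (\<Sum>y\<le>n. real y * (real y - 1) * binom_W n x y)
        + (1 - 2 * \<mu>) * (\<Sum>y\<le>n. real y * binom_W n x y) + \<mu>\<^sup>2 * (\<Sum>y\<le>n. binom_W n x y)"
    by (simp add: sum_distrib_left sum.distrib[symmetric] power2_eq_square algebra_simps)
  then show "(\<Sum>y\<le>n. (real y - \<mu>)\<^sup>2 * binom_W n x y) = real n * x * (1 - x)"
    unfolding m1 m2 sum_binom_W \<mu>_def by (simp add: power2_eq_square algebra_simps)
  have "(\<Sum>y\<le>n. (real y - \<mu>) ^ 3 * binom_W n x y)
      = (\<Sum>y\<le>n. real y * (real y - 1) * (real y - 2) * binom_W n x y)
        + (3 - 3 * \<mu>) * (\<Sum>y\<le>n. real y * (real y - 1) * binom_W n x y)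
        + (1 - 3 * \<mu> + 3 * \<mu>\<^sup>2) * (\<Sum>y\<le>n. real y * binom_W n x y)
        - \<mu> ^ 3 * (\<Sum>y\<le>n. binom_W n x y)"
    by (simp add: sum_distrib_left sum_subtractf[symmetric] sum.distrib[symmetric]
        power2_eq_square power3_eq_cube algebra_simps)
  then show "(\<Sum>y\<le>n. (real y - \<mu>) ^ 3 * binom_W n x y) = real n * x * (1 - x) * (1 - 2 * x)"
    unfolding m1 m2 m3 sum_binom_W \<mu>_def by (simp add: power2_eq_square power3_eq_cube algebra_simps)
qed

lemma sum_binom_W_ln_le:
  assumes "0 \<le> x" "x \<le> 1" "\<And>y. y \<le> n \<Longrightarrow> 0 < f y"
  shows "(\<Sum>y\<le>n. binom_W n x y * ln (f y)) \<le> ln (\<Sum>y\<le>n. binom_W n x y * f y)"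
  using concave_on_sum[OF finite_atMost _ ln_concave, of n "binom_W n x" f]
    assms sum_binom_W binom_W_nonneg by auto

text \<open>\<open>n\<close> times the Kullback-Leibler divergence of Bernoulli(\<open>y / n\<close>) from Bernoulli(\<open>x\<close>).\<close>
definition type_KL :: "nat \<Rightarrow> real \<Rightarrow> nat \<Rightarrow> real" where
  "type_KL n x y = real y * ln (real y / (real n * x))
     + real (n - y) * ln (real (n - y) / (real n * (1 - x)))"

lemma expected_type_KL_ge:
  assumes "3 \<le> n" "0 < x" "x < 1"
  shows "1/2 - (1 - 2 * x)\<^sup>2 / (6 * (real n * x * (1 - x))) \<le> (\<Sum>y\<le>n. binom_W n x y * type_KL n x y)"
proof -
  define m where "m = real n * x"
  define m' where "m' = real n * (1 - x)"
  have "0 < m" "0 < m'" unfolding m_def m'_def using assms by auto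
  define c2 where "c2 = 1 / (2 * m) + 1 / (2 * m')"
  define c3 where "c3 = 1 / (6 * m'\<^sup>2) - 1 / (6 * m\<^sup>2)"
  \<comment> \<open>Expanding both summands of \<open>type_KL\<close> to third order around the mean; the linear terms cancel.\<close>
  have pointwise: "c2 * (real y - m)\<^sup>2 + c3 * (real y - m) ^ 3 \<le> type_KL n x y" if "y \<le> n" for y
  proof -
    have dev: "real (n - y) - m' = - (real y - m)"
      unfolding m_def m'_def using that by (simp add: of_nat_diff algebra_simps)
    have "c2 * (real y - m)\<^sup>2 + c3 * (real y - m) ^ 3
        = ((real y - m)\<^sup>2 / (2 * m) - (real y - m) ^ 3 / (6 * m\<^sup>2))
          + ((real (n - y) - m')\<^sup>2 / (2 * m') - (real (n - y) - m') ^ 3 / (6 * m'\<^sup>2))"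
      unfolding dev c2_def c3_def by (simp add: power2_eq_square power3_eq_cube algebra_simps
          add_divide_distrib diff_divide_distrib)
    also have "\<dots> \<le> (real y * ln (real y / m) - real y + m)
        + (real (n - y) * ln (real (n - y) / m') - real (n - y) + m')"
      using \<open>0 < m\<close> \<open>0 < m'\<close> by (intro add_mono xlnx_ge_cubic_scaled) auto
    also have "\<dots> = type_KL n x y"
      unfolding type_KL_def m_def m'_def using that by (simp add: of_nat_diff algebra_simps)
    finally show ?thesis .
  qed
  have "1/2 - (1 - 2 * x)\<^sup>2 / (6 * (real n * x * (1 - x)))
      = c2 * (real n * x * (1 - x)) + c3 * (real n * x * (1 - x) * (1 - 2 * x))"
    using assms unfolding c2_def c3_def m_def m'_def
    by (simp add: divide_simps power2_eq_square) (simp add: algebra_simps)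
  also have "\<dots> = c2 * (\<Sum>y\<le>n. (real y - m)\<^sup>2 * binom_W n x y) + c3 * (\<Sum>y\<le>n. (real y - m) ^ 3 * binom_W n x y)"
    unfolding m_def binom_W_central_moments[OF assms(1)] ..
  also have "\<dots> = (\<Sum>y\<le>n. binom_W n x y * (c2 * (real y - m)\<^sup>2 + c3 * (real y - m) ^ 3))"
    by (simp add: sum.distrib sum_distrib_left algebra_simps)
  also have "\<dots> \<le> (\<Sum>y\<le>n. binom_W n x y * type_KL n x y)"
    using pointwise assms by (intro sum_mono mult_left_mono binom_W_nonneg) auto
  finally show ?thesis .
qed

section \<open>Relative entropy and the dual bound on capacity\<close>

definition rel_ent_term :: "real \<Rightarrow> real \<Rightarrow> real" where
  "rel_ent_term w q = (if w = 0 then 0 else w * ln (w / q))"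

definition binom_div :: "nat \<Rightarrow> (nat \<Rightarrow> real) \<Rightarrow> real \<Rightarrow> real" where
  "binom_div n Q x = (\<Sum>y\<le>n. rel_ent_term (binom_W n x y) (Q y))"

lemma rel_ent_term_le:
  assumes "0 \<le> w" "w \<le> 1" "0 < q"
  shows "rel_ent_term w q \<le> w * - ln q"
  using assms by (auto simp: rel_ent_term_def ln_div mult_nonneg_nonpos field_simps)

lemma abs_rel_ent_term_le:
  assumes "0 \<le> w" "w \<le> 1" "0 \<le> c"
  shows "\<bar>rel_ent_term w c\<bar> \<le> 1 + \<bar>ln c\<bar>"
proof (cases "w = 0 \<or> c = 0")
  case True
  then show ?thesis by (auto simp: rel_ent_term_def)
next
  case False
  then have w: "0 < w" and c: "0 < c"
    using assms by auto
  have "- ln w \<le> 1 / w - 1"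
    using ln_le_minus_one[of "1 / w"] w by (simp add: ln_div)
  then have "- (w * ln w) \<le> 1"
    using w mult_left_mono[of "- ln w" "1 / w - 1" w] by (simp add: algebra_simps)
  moreover have "w * ln w \<le> 0"
    using w assms by (simp add: mult_nonneg_nonpos)
  moreover have "\<bar>w * ln c\<bar> \<le> \<bar>ln c\<bar>"
    using w assms by (simp add: abs_mult mult_left_le_one_le)
  moreover have "rel_ent_term w c = w * ln w - w * ln c"
    using w c by (simp add: rel_ent_term_def ln_div algebra_simps)
  ultimately show ?thesis by linarith
qed

lemma borel_measurable_rel_ent_term:
  assumes [measurable]: "w \<in> borel_measurable M"
  shows "(\<lambda>x. rel_ent_term (w x) c) \<in> borel_measurable M"
  unfolding rel_ent_term_def by measurable

lemma integrable_rel_ent_term: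
  assumes "finite_measure M" "w \<in> borel_measurable M" "\<And>x. x \<in> space M \<Longrightarrow> 0 \<le> w x \<and> w x \<le> 1"
    and "0 \<le> c"
  shows "integrable M (\<lambda>x. rel_ent_term (w x) c)"
proof -
  interpret finite_measure M by fact
  show ?thesis
  proof (rule integrable_const_bound[where B = "1 + \<bar>ln c\<bar>"])
    show "AE x in M. norm (rel_ent_term (w x) c) \<le> 1 + \<bar>ln c\<bar>"
      using assms abs_rel_ent_term_le by (intro AE_I2) auto
    show "(\<lambda>x. rel_ent_term (w x) c) \<in> borel_measurable M"
      using assms(2) by (rule borel_measurable_rel_ent_term)
  qed
qed

text \<open>Replacing the reference value \<open>\<integral> w\<close> by any \<open>q > 0\<close> costs at most \<open>q - \<integral> w\<close>,
  by \<open>ln t \<le> t - 1\<close>.\<close>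
lemma integral_rel_ent_term_le:
  assumes "prob_space M" "w \<in> borel_measurable M" "\<And>x. x \<in> space M \<Longrightarrow> 0 \<le> w x \<and> w x \<le> 1"
    and "0 < q"
  defines "p \<equiv> \<integral>x. w x \<partial>M"
  shows "(\<integral>x. rel_ent_term (w x) p \<partial>M) \<le> (\<integral>x. rel_ent_term (w x) q \<partial>M) + (q - p)"
proof -
  interpret prob_space M by fact
  have w_int: "integrable M w"
    using assms by (intro integrable_const_bound[where B = 1]) auto
  have "0 \<le> p"
    unfolding p_def using assms by (intro Bochner_Integration.integral_nonneg) auto
  show ?thesis
  proof (cases "p = 0")
    case True
    then have "AE x in M. w x = 0"
      using integral_nonneg_eq_0_iff_AE[OF w_int] assms unfolding p_def by auto
    then have "(\<integral>x. rel_ent_term (w x) p \<partial>M) = (\<integral>x. rel_ent_term (w x) q \<partial>M)"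
      using assms(2) by (intro integral_cong_AE borel_measurable_rel_ent_term) (auto simp: rel_ent_term_def)
    then show ?thesis
      using True \<open>0 < q\<close> by simp
  next
    case False
    then have "0 < p"
      using \<open>0 \<le> p\<close> by simp
    have "rel_ent_term (w x) p = rel_ent_term (w x) q + w x * ln (q / p)" if "x \<in> space M" for x
      using assms that \<open>0 < p\<close> by (auto simp: rel_ent_term_def ln_div algebra_simps)
    then have "(\<integral>x. rel_ent_term (w x) p \<partial>M) = (\<integral>x. rel_ent_term (w x) q + w x * ln (q / p) \<partial>M)"
      by (intro Bochner_Integration.integral_cong) auto
    also have "\<dots> = (\<integral>x. rel_ent_term (w x) q \<partial>M) + p * ln (q / p)"
      using integrable_rel_ent_term[of M w q] assms w_int unfolding p_def
      by (simp add: prob_space_axioms finite_measure_axioms)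
    also have "p * ln (q / p) \<le> p * (q / p - 1)"
      using \<open>0 < p\<close> \<open>0 < q\<close> by (intro mult_left_mono ln_le_minus_one) auto
    also have "p * (q / p - 1) = q - p"
      using \<open>0 < p\<close> by (simp add: algebra_simps)
    finally show ?thesis by simp
  qed
qed

lemma binom_MI_eq_integral_binom_div: "binom_MI n M = (\<integral>x. binom_div n (binom_out n M) x \<partial>M)"
  by (simp add: binom_MI_def binom_div_def rel_ent_term_def)

lemma input_dists_space: "M \<in> input_dists \<Longrightarrow> space M = {0..1}"
  unfolding input_dists_def by (auto dest: sets_eq_imp_space_eq simp: space_restrict_space)

lemma input_dists_measurable:
  assumes "M \<in> input_dists" "f \<in> borel_measurable borel"
  shows "f \<in> borel_measurable M"
proof -
  have "f \<in> borel_measurable (restrict_space borel {0..1})"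
    using assms(2) by (rule measurable_restrict_space1)
  moreover have "borel_measurable M = borel_measurable (restrict_space borel {0..1::real})"
    using assms(1) unfolding input_dists_def by (intro measurable_cong_sets) auto
  ultimately show ?thesis
    by metis
qed

lemma input_dists_binom_W_bounds:
  assumes "M \<in> input_dists" "x \<in> space M"
  shows "0 \<le> binom_W n x y \<and> binom_W n x y \<le> 1"
proof -
  have "0 \<le> x" "x \<le> 1"
    using assms input_dists_space by auto
  then show ?thesis
    by (simp add: binom_W_nonneg binom_W_le_1)
qed

lemma input_dists_integrable_binom_W:
  assumes "M \<in> input_dists"
  shows "integrable M (\<lambda>x. binom_W n x y)"
proof -
  interpret prob_space M
    using assms by (simp add: input_dists_def)
  show ?thesis
  proof (rule integrable_const_bound[where B = 1])
    show "AE x in M. norm (binom_W n x y) \<le> 1"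
      using input_dists_binom_W_bounds[OF assms] by (intro AE_I2) auto
    show "(\<lambda>x. binom_W n x y) \<in> borel_measurable M"
      using assms binom_W_measurable by (rule input_dists_measurable)
  qed
qed

lemma binom_out_nonneg: "M \<in> input_dists \<Longrightarrow> 0 \<le> binom_out n M y"
  unfolding binom_out_def by (intro Bochner_Integration.integral_nonneg) (simp add: input_dists_binom_W_bounds)

lemma sum_binom_out:
  assumes "M \<in> input_dists"
  shows "(\<Sum>y\<le>n. binom_out n M y) = 1"
proof -
  interpret prob_space M
    using assms by (simp add: input_dists_def)
  have "(\<Sum>y\<le>n. binom_out n M y) = (\<integral>x. (\<Sum>y\<le>n. binom_W n x y) \<partial>M)"
    unfolding binom_out_def using input_dists_integrable_binom_W[OF assms]
    by (simp add: Bochner_Integration.integral_sum)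
  then show ?thesis
    by (simp add: sum_binom_W prob_space)
qed

lemma binom_MI_le_sup_binom_div:
  assumes M: "M \<in> input_dists"
    and Q_pos: "\<And>y. y \<le> n \<Longrightarrow> 0 < Q y" and Q_sum: "(\<Sum>y\<le>n. Q y) \<le> 1"
    and bound: "\<And>x. 0 \<le> x \<Longrightarrow> x \<le> 1 \<Longrightarrow> binom_div n Q x \<le> B"
  shows "binom_MI n M \<le> B"
proof -
  interpret prob_space M
    using M by (simp add: input_dists_def)
  have W_meas: "(\<lambda>x. binom_W n x y) \<in> borel_measurable M" for y
    using M binom_W_measurable by (rule input_dists_measurable)
  note W_bounds = input_dists_binom_W_bounds[OF M]
  have term_int: "integrable M (\<lambda>x. rel_ent_term (binom_W n x y) c)" if "0 \<le> c" for y c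
    using W_meas W_bounds that by (intro integrable_rel_ent_term) (auto simp: finite_measure_axioms)
  have "binom_MI n M = (\<Sum>y\<le>n. \<integral>x. rel_ent_term (binom_W n x y) (binom_out n M y) \<partial>M)"
    unfolding binom_MI_eq_integral_binom_div binom_div_def
    using term_int binom_out_nonneg[OF M] by (simp add: Bochner_Integration.integral_sum)
  also have "\<dots> \<le> (\<Sum>y\<le>n. (\<integral>x. rel_ent_term (binom_W n x y) (Q y) \<partial>M) + (Q y - binom_out n M y))"
    unfolding binom_out_def using W_meas W_bounds Q_pos
    by (intro sum_mono integral_rel_ent_term_le) (auto simp: prob_space_axioms)
  also have "\<dots> = (\<integral>x. binom_div n Q x \<partial>M) + ((\<Sum>y\<le>n. Q y) - (\<Sum>y\<le>n. binom_out n M y))"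
    unfolding binom_div_def using term_int Q_pos
    by (simp add: Bochner_Integration.integral_sum less_imp_le sum.distrib sum_subtractf)
  also have "\<dots> \<le> (\<integral>x. binom_div n Q x \<partial>M)"
    using Q_sum sum_binom_out[OF M] by simp
  also have "\<dots> \<le> (\<integral>x. B \<partial>M)"
    unfolding binom_div_def using bound[unfolded binom_div_def] term_int Q_pos
    by (intro integral_mono Bochner_Integration.integrable_sum)
      (auto simp: input_dists_space[OF M] less_imp_le)
  finally show ?thesis
    by (simp add: prob_space)
qed

lemma input_dists_nonempty: "input_dists \<noteq> {}"
proof -
  have "return (restrict_space borel {0..1::real}) 0 \<in> input_dists"
    unfolding input_dists_def by (auto intro!: prob_space_return simp: space_restrict_space)
  then show ?thesis by blast
qed

lemma binom_capacity_le_sup_binom_div: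
  assumes "\<And>y. y \<le> n \<Longrightarrow> 0 < Q y" "(\<Sum>y\<le>n. Q y) \<le> 1"
    and "\<And>x. 0 \<le> x \<Longrightarrow> x \<le> 1 \<Longrightarrow> binom_div n Q x \<le> B"
  shows "binom_capacity n \<le> B"
  unfolding binom_capacity_def
proof (rule cSup_least)
  show "binom_MI n ` input_dists \<noteq> {}"
    using input_dists_nonempty by blast
  fix v assume "v \<in> binom_MI n ` input_dists"
  then show "v \<le> B"
    using binom_MI_le_sup_binom_div[OF _ assms] by blast
qed

section \<open>The divergence from the arcsine mixture\<close>

text \<open>The arcsine part approximates the output law of the asymptotically
  capacity-achieving (Jeffreys) input; the second part, of mass at most \<open>\<epsilon>\<close>, keeps
  \<open>Q\<close> large enough near \<open>0\<close> and \<open>n\<close>.\<close>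
definition arcsine_mix :: "nat \<Rightarrow> real \<Rightarrow> nat \<Rightarrow> real" where
  "arcsine_mix n \<epsilon> y =
     (1 - \<epsilon>) * (if 1 \<le> y \<and> y < n then 1 / sqrt (real y * (real n - real y)) else 0) / pi
     + (\<epsilon> / 4) / (real (min y (n - y)) + 1)\<^sup>2"

lemma arcsine_mix_ge_edge:
  "0 \<le> \<epsilon> \<Longrightarrow> \<epsilon> \<le> 1 \<Longrightarrow> (\<epsilon> / 4) / (real (min y (n - y)) + 1)\<^sup>2 \<le> arcsine_mix n \<epsilon> y"
  unfolding arcsine_mix_def by simp

lemma arcsine_mix_ge_interior:
  "0 \<le> \<epsilon> \<Longrightarrow> \<epsilon> \<le> 1 \<Longrightarrow> 1 \<le> y \<Longrightarrow> y < n
    \<Longrightarrow> (1 - \<epsilon>) / (pi * sqrt (real y * (real n - real y))) \<le> arcsine_mix n \<epsilon> y"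
  unfolding arcsine_mix_def by (simp add: mult.commute)

lemma arcsine_mix_pos: "0 < \<epsilon> \<Longrightarrow> \<epsilon> \<le> 1 \<Longrightarrow> 0 < arcsine_mix n \<epsilon> y"
  by (rule less_le_trans[OF _ arcsine_mix_ge_edge]) simp_all

lemma sum_arcsine_mix_le_1:
  assumes "2 \<le> n" "0 \<le> \<epsilon>" "\<epsilon> \<le> 1"
  shows "(\<Sum>y\<le>n. arcsine_mix n \<epsilon> y) \<le> 1"
proof -
  have "(\<Sum>y\<le>n. if 1 \<le> y \<and> y < n then 1 / sqrt (real y * (real n - real y)) else 0)
      = (\<Sum>y=1..n-1. 1 / sqrt (real y * (real n - real y)))"
    by (rule sum.mono_neutral_cong_right) auto
  then have arcsine: "(\<Sum>y\<le>n. if 1 \<le> y \<and> y < n then 1 / sqrt (real y * (real n - real y)) else 0) \<le> pi"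
    using sum_inverse_sqrt_le_pi[OF assms(1)] by simp
  have "(\<Sum>y\<le>n. 1 / (real (min y (n - y)) + 1)\<^sup>2)
      \<le> (\<Sum>y\<le>n. 1 / (real y + 1)\<^sup>2 + 1 / (real (n - y) + 1)\<^sup>2)"
    by (intro sum_mono) (auto simp: min_def)
  also have "\<dots> = 2 * (\<Sum>y\<le>n. 1 / (real y + 1)\<^sup>2)"
    using sum.atLeastAtMost_rev[of "\<lambda>y. 1 / (real y + 1)\<^sup>2" 0 n]
    by (simp add: sum.distrib atLeast0AtMost)
  also have "\<dots> \<le> 4"
    using sum_inverse_square_le[of n] divide_nonneg_nonneg[of 1 "real n + 1"] by linarith
  finally have tails: "(\<Sum>y\<le>n. 1 / (real (min y (n - y)) + 1)\<^sup>2) \<le> 4" .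
  have "(\<Sum>y\<le>n. arcsine_mix n \<epsilon> y)
      = (1 - \<epsilon>) / pi * (\<Sum>y\<le>n. if 1 \<le> y \<and> y < n then 1 / sqrt (real y * (real n - real y)) else 0)
        + \<epsilon> / 4 * (\<Sum>y\<le>n. 1 / (real (min y (n - y)) + 1)\<^sup>2)"
    unfolding arcsine_mix_def by (simp add: sum.distrib sum_distrib_left)
  also have "\<dots> \<le> (1 - \<epsilon>) / pi * pi + \<epsilon> / 4 * 4"
    using arcsine tails assms by (intro add_mono mult_left_mono) auto
  finally show ?thesis by simp
qed

text \<open>\<open>min y (n - y)\<close> is dominated both by \<open>y\<close> and by \<open>n - y\<close>, whose means are \<open>n x\<close>
  and \<open>n (1 - x)\<close>, and \<open>min x (1 - x) \<le> 2 x (1 - x)\<close>.\<close>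
lemma sum_binom_W_min_le:
  assumes "1 \<le> n" "0 \<le> x" "x \<le> 1"
  shows "(\<Sum>y\<le>n. binom_W n x y * (real (min y (n - y)) + 1)) \<le> 1 + 2 * (real n * x * (1 - x))"
proof -
  let ?W = "binom_W n x"
  have "(\<Sum>y\<le>n. ?W y * (real (min y (n - y)) + 1)) \<le> (\<Sum>y\<le>n. ?W y * (real y + 1))"
    using assms by (intro sum_mono mult_left_mono binom_W_nonneg) auto
  also have "\<dots> = real n * x + 1"
    using sum_binom_W_mean[OF assms(1), of x] by (simp add: algebra_simps sum.distrib sum_binom_W)
  finally have left: "(\<Sum>y\<le>n. ?W y * (real (min y (n - y)) + 1)) \<le> real n * x + 1" .
  have "(\<Sum>y\<le>n. ?W y * (real (min y (n - y)) + 1)) \<le> (\<Sum>y\<le>n. ?W y * (real (n - y) + 1))"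
    using assms by (intro sum_mono mult_left_mono binom_W_nonneg) auto
  also have "\<dots> = (\<Sum>y\<le>n. (real n + 1) * ?W y - real y * ?W y)"
    by (rule sum.cong) (auto simp: of_nat_diff algebra_simps)
  also have "\<dots> = real n * (1 - x) + 1"
    using sum_binom_W_mean[OF assms(1), of x]
    by (simp add: sum_subtractf sum_binom_W flip: sum_distrib_left) (simp add: algebra_simps)
  finally have right: "(\<Sum>y\<le>n. ?W y * (real (min y (n - y)) + 1)) \<le> real n * (1 - x) + 1" .
  have "min x (1 - x) * 1 \<le> min x (1 - x) * (2 * max x (1 - x))"
    using assms by (intro mult_left_mono) (auto simp: max_def)
  moreover have "min x (1 - x) * max x (1 - x) = x * (1 - x)"
    by (simp add: min_def max_def)
  ultimately have "real n * min x (1 - x) \<le> real n * (2 * x * (1 - x))"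
    by (intro mult_left_mono) auto
  then show ?thesis
    using left right by (auto simp: min_def split: if_splits)
qed

lemma binom_div_arcsine_mix_le_tails:
  assumes "1 \<le> n" "0 \<le> x" "x \<le> 1" "0 < \<epsilon>" "\<epsilon> \<le> 1"
  shows "binom_div n (arcsine_mix n \<epsilon>) x \<le> ln (4 / \<epsilon>) + 2 * ln (1 + 2 * (real n * x * (1 - x)))"
proof -
  let ?W = "binom_W n x"
  define m where "m y = real (min y (n - y)) + 1" for y
  have m_pos: "0 < m y" for y
    by (simp add: m_def)
  have "rel_ent_term (?W y) (arcsine_mix n \<epsilon> y) \<le> ?W y * (ln (4 / \<epsilon>) + 2 * ln (m y))" for y
  proof -
    have "- ln (arcsine_mix n \<epsilon> y) \<le> - ln ((\<epsilon> / 4) / (m y)\<^sup>2)"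
      using arcsine_mix_ge_edge[of \<epsilon> y n] assms m_pos[of y]
      by (simp only: m_def neg_le_iff_le) (intro ln_mono; simp)
    also have "\<dots> = ln (4 / \<epsilon>) + 2 * ln (m y)"
      using assms m_pos[of y] by (simp add: ln_div ln_mult ln_realpow)
    finally show ?thesis
      using assms arcsine_mix_pos[of \<epsilon> n y] binom_W_nonneg[of x n y] binom_W_le_1[of x n y]
      by (intro order_trans[OF rel_ent_term_le] mult_left_mono) auto
  qed
  then have "binom_div n (arcsine_mix n \<epsilon>) x \<le> (\<Sum>y\<le>n. ?W y * (ln (4 / \<epsilon>) + 2 * ln (m y)))"
    unfolding binom_div_def by (intro sum_mono)
  also have "\<dots> = ln (4 / \<epsilon>) + 2 * (\<Sum>y\<le>n. ?W y * ln (m y))"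
    by (simp add: algebra_simps sum.distrib sum_distrib_left sum_binom_W flip: sum_distrib_right)
  moreover have "(\<Sum>y\<le>n. ?W y * ln (m y)) \<le> ln (\<Sum>y\<le>n. ?W y * m y)"
    using assms m_pos by (intro sum_binom_W_ln_le)
  moreover have "ln (\<Sum>y\<le>n. ?W y * m y) \<le> ln (1 + 2 * (real n * x * (1 - x)))"
  proof (rule ln_mono)
    have "(\<Sum>y\<le>n. ?W y * 1) \<le> (\<Sum>y\<le>n. ?W y * m y)"
      using assms by (intro sum_mono mult_left_mono binom_W_nonneg) (auto simp: m_def)
    then show "0 < (\<Sum>y\<le>n. ?W y * m y)"
      by (simp add: sum_binom_W)
    show "(\<Sum>y\<le>n. ?W y * m y) \<le> 1 + 2 * (real n * x * (1 - x))"
      unfolding m_def by (rule sum_binom_W_min_le[OF assms(1-3)])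
  qed
  ultimately show ?thesis
    by linarith
qed

lemma ln_binom_W_add_type_KL_edge:
  assumes "0 < x" "x < 1" "y = 0 \<or> y = n"
  shows "ln (binom_W n x y) + type_KL n x y = 0"
  using assms by (cases "n = 0") (auto simp: binom_W_def type_KL_def ln_realpow ln_div ln_mult)

lemma ln_binom_W_add_type_KL_le:
  assumes "0 < x" "x < 1" "1 \<le> y" "y < n"
  shows "ln (binom_W n x y) + type_KL n x y
    \<le> - ln (2 * pi) / 2 + (ln (real n) - ln (real y) - ln (real n - real y)) / 2"
proof -
  have pos: "0 < real y" "0 < real n - real y" "0 < real n" "0 < real (n choose y)"
    using assms by auto
  have "ln (binom_W n x y) = ln (real (n choose y)) + real y * ln x + (real n - real y) * ln (1 - x)"
    unfolding binom_W_def using assms pos by (simp add: ln_mult ln_realpow of_nat_diff)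
  moreover have "ln (real y / (real n * x)) = ln (real y) - ln (real n) - ln x"
    and "ln ((real n - real y) / (real n * (1 - x))) = ln (real n - real y) - ln (real n) - ln (1 - x)"
    using assms pos by (simp_all add: ln_div ln_mult)
  then have "type_KL n x y = real y * (ln (real y) - ln (real n) - ln x)
      + (real n - real y) * (ln (real n - real y) - ln (real n) - ln (1 - x))"
    unfolding type_KL_def using assms by (simp add: of_nat_diff)
  moreover note ln_binomial_le[OF assms(3,4)]
  ultimately show ?thesis
    using assms by (simp add: of_nat_diff algebra_simps)
qed

lemma ln_arcsine_mix_ge_interior:
  assumes "0 \<le> \<epsilon>" "\<epsilon> < 1" "1 \<le> y" "y < n"
  shows "ln (1 - \<epsilon>) - ln pi - (ln (real y) + ln (real n - real y)) / 2 \<le> ln (arcsine_mix n \<epsilon> y)"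
proof -
  have pos: "0 < real y" "0 < real n - real y" "0 < 1 - \<epsilon>"
    using assms by auto
  then have "ln (1 - \<epsilon>) - ln pi - (ln (real y) + ln (real n - real y)) / 2
      = ln ((1 - \<epsilon>) / (pi * sqrt (real y * (real n - real y))))"
    by (simp add: ln_div ln_mult ln_sqrt)
  also have "\<dots> \<le> ln (arcsine_mix n \<epsilon> y)"
    using pos assms by (intro ln_mono arcsine_mix_ge_interior) auto
  finally show ?thesis .
qed

lemma ln_binom_W_div_arcsine_mix_le:
  assumes "0 < x" "x < 1" "0 < \<epsilon>" "\<epsilon> < 1" "y \<le> n"
  shows "ln (binom_W n x y) - ln (arcsine_mix n \<epsilon> y)
    \<le> max (ln (real n * pi / 2) / 2 - ln (1 - \<epsilon>)) (ln (4 / \<epsilon>)) - type_KL n x y"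
proof (cases "y = 0 \<or> y = n")
  case True
  then have "\<epsilon> / 4 \<le> arcsine_mix n \<epsilon> y"
    using arcsine_mix_ge_edge[of \<epsilon> y n] assms by auto
  then have "ln (\<epsilon> / 4) \<le> ln (arcsine_mix n \<epsilon> y)"
    using assms by (intro ln_mono) auto
  moreover have "ln (\<epsilon> / 4) = - ln (4 / \<epsilon>)"
    using assms by (simp add: ln_div)
  ultimately show ?thesis
    using ln_binom_W_add_type_KL_edge[OF assms(1,2) True] by simp
next
  case False
  then have y: "1 \<le> y" "y < n"
    using assms by auto
  have "ln (real n * pi / 2) = ln (real n) + ln pi - ln 2" "ln (2 * pi) = ln 2 + ln pi"
    using y by (simp_all add: ln_div ln_mult)
  moreover have "ln (1 - \<epsilon>) - ln pi - (ln (real y) + ln (real n - real y)) / 2 \<le> ln (arcsine_mix n \<epsilon> y)"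
    using assms y by (intro ln_arcsine_mix_ge_interior) auto
  ultimately have "ln (binom_W n x y) - ln (arcsine_mix n \<epsilon> y)
      \<le> ln (real n * pi / 2) / 2 - ln (1 - \<epsilon>) - type_KL n x y"
    using ln_binom_W_add_type_KL_le[OF assms(1,2) y] by argo
  then show ?thesis
    by linarith
qed

lemma binom_div_arcsine_mix_le_bulk:
  assumes "0 < x" "x < 1" "0 < \<epsilon>" "\<epsilon> < 1"
  shows "binom_div n (arcsine_mix n \<epsilon>) x
    \<le> max (ln (real n * pi / 2) / 2 - ln (1 - \<epsilon>)) (ln (4 / \<epsilon>)) - (\<Sum>y\<le>n. binom_W n x y * type_KL n x y)"
    (is "_ \<le> ?A - _")
proof -
  let ?W = "binom_W n x" and ?Q = "arcsine_mix n \<epsilon>"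
  have "rel_ent_term (?W y) (?Q y) \<le> ?W y * (?A - type_KL n x y)" if "y \<le> n" for y
  proof -
    have "0 < ?W y" "0 < ?Q y"
      using that assms by (auto intro: binom_W_pos arcsine_mix_pos)
    then show ?thesis
      using ln_binom_W_div_arcsine_mix_le[OF assms that] by (simp add: rel_ent_term_def ln_div)
  qed
  then have "binom_div n ?Q x \<le> (\<Sum>y\<le>n. ?W y * (?A - type_KL n x y))"
    unfolding binom_div_def by (intro sum_mono) auto
  also have "\<dots> = ?A - (\<Sum>y\<le>n. ?W y * type_KL n x y)"
    by (simp add: right_diff_distrib sum_subtractf sum_binom_W flip: sum_distrib_right)
  finally show ?thesis .
qed

lemma exp_3_ge_20: "20 \<le> exp (3 :: real)"
proof -
  have "2718 / 1000 \<le> exp (1 :: real)"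
    using e_approx_32 by (simp add: abs_if split: if_split_asm)
  then have "(2718 / 1000) ^ 3 \<le> exp (1 :: real) ^ 3"
    by (intro power_mono) auto
  moreover have "exp (1 :: real) ^ 3 = exp 3"
    by (simp flip: exp_of_nat_mult)
  ultimately show ?thesis
    by (simp add: power3_eq_cube)
qed

lemma ln_four_mult_le:
  fixes L :: real
  assumes "0 < L"
  shows "ln (4 * L) \<le> L / 5 + 2"
proof -
  have "ln (4 * L) - 3 = ln (4 * L / exp 3)"
    using assms by (simp add: ln_div)
  also have "\<dots> \<le> 4 * L / exp 3 - 1"
    using assms by (intro ln_le_minus_one) auto
  also have "4 * L / exp 3 \<le> 4 * L / 20"
    using assms exp_3_ge_20 by (intro divide_left_mono) auto
  finally show ?thesis by simp
qed

lemma minus_ln_one_minus_inverse_le: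
  fixes L :: real
  assumes "2 \<le> L"
  shows "- ln (1 - 1 / L) \<le> 2 / L"
proof -
  have "- ln (1 - 1 / L) = ln (1 / (1 - 1 / L))"
    using assms by (simp add: ln_div)
  also have "\<dots> \<le> 1 / (1 - 1 / L) - 1"
    using assms by (intro ln_le_minus_one) (simp add: field_simps)
  also have "\<dots> \<le> 2 / L"
    using assms by (simp add: field_simps)
  finally show ?thesis .
qed

lemma tail_estimate_le:
  fixes L :: real
  assumes "2 \<le> L"
  shows "ln (4 * L) + 2 * ln (1 + L / 15) \<le> L / 2 + 10 / L"
proof -
  have "2 * L \<le> L\<^sup>2 / 6 + 10"
    using sum_squares_ge_zero[of "L - 6" 0] by (simp add: power2_eq_square algebra_simps)
  then have "L / 5 + 2 + 2 * (L / 15) \<le> L / 2 + 10 / L"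
    using assms by (simp add: divide_simps power2_eq_square) (simp add: algebra_simps)
  moreover have "ln (1 + L / 15) \<le> L / 15"
    using assms by (intro ln_add_one_self_le_self) auto
  ultimately show ?thesis
    using ln_four_mult_le[of L] assms by linarith
qed

lemma bulk_estimate_le:
  fixes L :: real
  assumes "2 \<le> L"
  shows "max ((L + 1) / 2 - ln (1 - 1 / L)) (ln (4 * L)) - (1/2 - 5 / L) \<le> L / 2 + 10 / L"
proof -
  have "2 / L + 5 / L \<le> 10 / L"
    using assms by (simp add: divide_simps)
  then have "(L + 1) / 2 - ln (1 - 1 / L) - (1/2 - 5 / L) \<le> L / 2 + 10 / L"
    using minus_ln_one_minus_inverse_le[OF assms] by argo
  moreover have "3 * L / 2 \<le> 3 * L\<^sup>2 / 10 + 5"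
    using sum_squares_ge_zero[of "L - 5/2" 0] by (simp add: power2_eq_square algebra_simps)
  then have "L / 5 + 2 - (1/2 - 5 / L) \<le> L / 2 + 10 / L"
    using assms by (simp add: divide_simps power2_eq_square) (simp add: algebra_simps)
  ultimately show ?thesis
    using ln_four_mult_le[of L] assms by (simp add: max_def)
qed

text \<open>Here \<open>L = ln (n * pi / (2 * e))\<close>; the mixing weight \<open>1 / L\<close> balances the cost
  \<open>- ln (1 - \<epsilon>)\<close> in the bulk against \<open>ln (4 / \<epsilon>)\<close> at the tails.\<close>
lemma binom_div_arcsine_mix_le:
  fixes L :: real
  assumes "3 \<le> n" "2 \<le> L" "ln (real n * pi / 2) = L + 1" "0 \<le> x" "x \<le> 1"
  shows "binom_div n (arcsine_mix n (1 / L)) x \<le> L / 2 + 10 / L"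
proof -
  define V where "V = real n * x * (1 - x)"
  show ?thesis
  proof (cases "V < L / 30")
    case True
    moreover have "0 \<le> V"
      unfolding V_def using assms by simp
    ultimately have "ln (1 + 2 * V) \<le> ln (1 + L / 15)"
      by (intro ln_mono) auto
    moreover have "binom_div n (arcsine_mix n (1 / L)) x \<le> ln (4 * L) + 2 * ln (1 + 2 * V)"
      unfolding V_def using binom_div_arcsine_mix_le_tails[of n x "1 / L"] assms by simp
    ultimately show ?thesis
      using tail_estimate_le[OF assms(2)] by linarith
  next
    case False
    then have "0 < V"
      using assms by simp
    then have x: "0 < x" "x < 1"
      unfolding V_def using assms by (auto simp: zero_less_mult_iff)
    have "(1 - 2 * x)\<^sup>2 = 1 - 4 * (x * (1 - x))" "0 \<le> x * (1 - x)"
      using x by (simp_all add: power2_eq_square algebra_simps)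
    then have "(1 - 2 * x)\<^sup>2 / (6 * V) \<le> 1 / (6 * V)"
      using \<open>0 < V\<close> by (intro divide_right_mono) auto
    also have "\<dots> \<le> 5 / L"
      using False assms by (simp add: field_simps)
    finally have "1/2 - 5 / L \<le> (\<Sum>y\<le>n. binom_W n x y * type_KL n x y)"
      using expected_type_KL_ge[OF assms(1) x] unfolding V_def by linarith
    moreover have "binom_div n (arcsine_mix n (1 / L)) x
        \<le> max ((L + 1) / 2 - ln (1 - 1 / L)) (ln (4 * L)) - (\<Sum>y\<le>n. binom_W n x y * type_KL n x y)"
      using binom_div_arcsine_mix_le_bulk[of x "1 / L" n] assms x by simp
    ultimately show ?thesis
      using bulk_estimate_le[OF assms(2)] by linarith
  qed
qed

lemma r_UB_ge:
  assumes "2 * exp 1 \<le> real n * pi"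
  shows "10 / ln (real n * pi / (2 * exp 1)) \<le> r_UB n"
proof -
  define t where "t = ((2 * exp 1) / (real n * pi)) powr (1/4)"
  have "0 < real n * pi"
    using assms exp_gt_zero[of 1] by linarith
  then have "0 \<le> t" "t \<le> 1"
    unfolding t_def using assms by (auto intro!: powr_le1 simp: field_simps)
  \<comment> \<open>\<open>ln a\<close> is \<open>ln \<bar>a\<bar>\<close> for \<open>a \<noteq> 0\<close>, so this also holds when \<open>1 - 2 * t\<close> is negative.\<close>
  have "ln (1 - 2 * t) \<le> 0"
  proof (cases "1 - 2 * t = 0")
    case False
    then have "exp (ln (1 - 2 * t)) \<le> exp 0"
      using exp_ln_abs[OF False] \<open>0 \<le> t\<close> \<open>t \<le> 1\<close> by simp
    then show ?thesis
      by simp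
  qed simp
  then show ?thesis
    unfolding r_UB_def t_def by simp
qed

lemma exp_2_le_15: "exp 2 \<le> (15 :: real)"
proof -
  have "exp 2 \<le> (272/100 :: real) ^ 2"
    using e_less_272 power_mono[of "exp 1" "272/100 :: real" 2] by (simp flip: exp_of_nat_mult)
  then show ?thesis
    by (simp add: power2_eq_square)
qed

lemma fifteen_le_n_pi_div_2e:
  assumes "28 \<le> n"
  shows "15 \<le> real n * pi / (2 * exp 1)"
proof -
  have "15 \<le> 28 * 3 / (2 * (272/100 :: real))"
    by simp
  also have "\<dots> \<le> real n * pi / (2 * exp 1)"
    using assms pi_gt3 e_less_272 by (intro frac_le mult_mono) auto
  finally show ?thesis .
qed

theorem theorem2:
  fixes n :: nat
  assumes "n \<ge> 28"
  shows "binom_capacity n \<le> 1/2 * ln (real n * pi / (2 * exp 1)) + r_UB n"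
proof -
  define L where "L = ln (real n * pi / (2 * exp 1))"
  have big: "15 \<le> real n * pi / (2 * exp 1)"
    using assms by (rule fifteen_le_n_pi_div_2e)
  then have "ln (exp 2) \<le> L"
    unfolding L_def using exp_2_le_15 by (intro ln_mono) auto
  then have L: "2 \<le> L"
    by simp
  have "ln (real n * pi / 2) = L + 1"
    using assms unfolding L_def by (simp add: ln_div ln_mult)
  then have "binom_capacity n \<le> L / 2 + 10 / L"
    using L assms
    by (intro binom_capacity_le_sup_binom_div[where Q = "arcsine_mix n (1 / L)"]
        arcsine_mix_pos sum_arcsine_mix_le_1 binom_div_arcsine_mix_le) auto
  moreover have "30 * exp 1 \<le> real n * pi"
    using big by (simp add: field_simps)
  then have "10 / L \<le> r_UB n"
    unfolding L_def using exp_gt_zero[of 1] by (intro r_UB_ge) linarith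
  ultimately show ?thesis
    unfolding L_def by simp
qed

end
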